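(* Let $\lambda,\mathfrak{g}_s,\alpha,\Sigma,Z_1(T)$ and $\bar W(X)=(X-\alpha)\sqrt{(X+\alpha)^2-2\mathfrak{g}_s/\alpha}$ be as below. For $X>\alpha$ let $Z_{1,X}(T)=Z_1\big(T+Z_1^{-1}(X)\big)$ for $T\ge0$, where $Z_1^{-1}$ is the inverse of the strictly decreasing bijection $Z_1:(0,\infty)\to(\alpha,\infty)$, and for $Y>0$ define $$G(X,Y;T)=\frac{Z_{1,X}'(T)}{Z_{1,X}'(0)}\cdot\frac{1}{Y+Z_{1,X}(T)}.$$ Then $G(X,Y;0)=\frac{1}{X+Y}$, $G$ satisfies $$\frac{\partial}{\partial T}G(X,Y;T)=-\frac{\partial}{\partial X}\Big(\bar W(X)\,G(X,Y;T)\Big),$$ and $$\lim_{Y\to\infty}Y\int_0^\infty G(X,Y;T)\,dT=\frac{\alpha-X}{Z_1'(Z_1^{-1}(X))}=\frac{1}{\sqrt{(X+\alpha)^2-2\mathfrak{g}_s/\alpha}}.$$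
   Context: Standing assumptions: $\lambda,\mathfrak{g}_s>0$, $\alpha$ is a positive real root of $\alpha^3-\lambda\alpha+\mathfrak{g}_s=0$ with $2\alpha^3>\mathfrak{g}_s$, $\Sigma=\tfrac12\sqrt{4\alpha^2-2\mathfrak{g}_s/\alpha}>0$, and $Z_1(T)=\alpha+\dfrac{\Sigma^2}{\sinh(\Sigma T)[\Sigma\cosh(\Sigma T)+\alpha\sinh(\Sigma T)]}$ for $T>0$. Primes denote derivatives in $T$. $G$ is the continuum loop propagator of generalized CDT and the limit is the (marked) cap function. *)

theory Defs
  imports "HOL-Analysis.Analysis"
begin

definition Sigma_cdt :: "real \<Rightarrow> real \<Rightarrow> real" where
  "Sigma_cdt \<alpha> gs = (1/2) * sqrt (4 * \<alpha>^2 - 2 * gs / \<alpha>)"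

definition Z1 :: "real \<Rightarrow> real \<Rightarrow> real \<Rightarrow> real" where
  "Z1 \<alpha> gs T = (let S = Sigma_cdt \<alpha> gs in
     \<alpha> + S^2 / (sinh (S * T) * (S * cosh (S * T) + \<alpha> * sinh (S * T))))"

definition Z1inv :: "real \<Rightarrow> real \<Rightarrow> real \<Rightarrow> real" where
  "Z1inv \<alpha> gs X = inv_into {0<..} (Z1 \<alpha> gs) X"

definition Z1X :: "real \<Rightarrow> real \<Rightarrow> real \<Rightarrow> real \<Rightarrow> real" where
  "Z1X \<alpha> gs X T = Z1 \<alpha> gs (T + Z1inv \<alpha> gs X)"

definition Gprop :: "real \<Rightarrow> real \<Rightarrow> real \<Rightarrow> real \<Rightarrow> real \<Rightarrow> real" where
  "Gprop \<alpha> gs X Y T =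
     deriv (Z1X \<alpha> gs X) T / deriv (Z1X \<alpha> gs X) 0 * (1 / (Y + Z1X \<alpha> gs X T))"

definition Wbar :: "real \<Rightarrow> real \<Rightarrow> real \<Rightarrow> real" where
  "Wbar \<alpha> gs X = (X - \<alpha>) * sqrt ((X + \<alpha>)^2 - 2 * gs / \<alpha>)"

end

theory Submission
  imports Defs "HOL-Real_Asymp.Real_Asymp"
begin

text \<open>
  Writing \<open>W\<close> for \<open>Wbar\<close>, \<open>Z\<^sub>1\<close> solves the autonomous equation \<open>Z' = -W(Z)\<close>: with
  \<open>p = sinh (\<Sigma>T)\<close> and \<open>q = cosh (\<Sigma>T)\<close>, the identity \<open>2g\<^sub>s/\<alpha> = 4\<alpha>\<^sup>2 - 4\<Sigma>\<^sup>2\<close> makes the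
  square root in \<open>W(Z\<^sub>1)\<close> a rational expression in \<open>p, q\<close>. Hence \<open>Z\<^sub>1\<close> decreases from \<open>\<infinity>\<close> to \<open>\<alpha>\<close>
  and its inverse has derivative \<open>-1/W\<close>. Since \<open>W(X) G(X,Y;T) = F(Z\<^sub>1(T + Z\<^sub>1\<^sup>-\<^sup>1(X)))\<close> with
  \<open>F(v) = W(v)/(Y+v)\<close>, and a function of \<open>T + Z\<^sub>1\<^sup>-\<^sup>1(X)\<close> has \<open>\<partial>\<^sub>X = -\<partial>\<^sub>T / W(X)\<close>, the
  evolution equation follows. Finally \<open>G = -\<partial>\<^sub>T log (Y + Z\<^sub>1(T + Z\<^sub>1\<^sup>-\<^sup>1(X))) / W(X)\<close>, so the
  integral of \<open>G\<close> is \<open>(log (Y+X) - log (Y+\<alpha>)) / W(X)\<close>, which behaves like \<open>(X-\<alpha>) / (Y W(X))\<close>.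
\<close>

lemma has_integral_atLeast_of_antiderivative:
  fixes g A :: "real \<Rightarrow> real"
  assumes deriv: "\<And>t. t \<ge> a \<Longrightarrow> (A has_real_derivative g t) (at t)"
    and nonneg: "\<And>t. t \<ge> a \<Longrightarrow> g t \<ge> 0"
    and lim: "(A \<longlongrightarrow> L) at_top"
  shows "(g has_integral L - A a) {a..}"
proof (rule has_integral_to_inf)
  have ftc: "(g has_integral A y - A a) {a..y}" if "a \<le> y" for y
    using that by (intro fundamental_theorem_of_calculus)
      (auto simp: has_real_derivative_iff_has_vector_derivative[symmetric]
        intro!: has_field_derivative_at_within deriv)
  show "g integrable_on {a..y}" for y
    by (cases "a \<le> y") (use ftc in auto)
  have "\<forall>\<^sub>F y in at_top. A y - A a = integral {a..y} g"
    using eventually_ge_at_top[of a] by eventually_elim (use ftc integral_unique in metis)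
  moreover have "((\<lambda>y. A y - A a) \<longlongrightarrow> L - A a) at_top"
    using lim by (intro tendsto_intros)
  ultimately show "((\<lambda>y. integral {a..y} g) \<longlongrightarrow> L - A a) at_top"
    by (rule Lim_transform_eventually[rotated])
  show "g y \<ge> 0" if "y \<ge> a" for y
    using nonneg that .
qed

lemma bij_betw_greaterThan_if_strict_antimono:
  fixes f :: "real \<Rightarrow> real"
  assumes mono: "strict_antimono_on {0<..} f" and cont: "continuous_on {0<..} f"
    and above: "\<And>t. t > 0 \<Longrightarrow> f t > a"
    and lim_top: "(f \<longlongrightarrow> a) at_top" and lim_0: "filterlim f at_top (at_right 0)"
  shows "bij_betw f {0<..} {a<..}"
proof (rule bij_betw_imageI)
  show "inj_on f {0<..}"
    using mono strict_antimono_iff_antimono by blast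
  show "f ` {0<..} = {a<..}"
  proof
    show "f ` {0<..} \<subseteq> {a<..}"
      using above by auto
    show "{a<..} \<subseteq> f ` {0<..}"
    proof
      fix X assume "X \<in> {a<..}"
      have "\<forall>\<^sub>F t in at_right 0. f t > X \<and> t > 0"
        using lim_0 by (simp add: filterlim_at_top_dense eventually_conj eventually_at_right_less)
      then obtain t1 where t1: "t1 > 0" "f t1 > X"
        using eventually_happens'[OF trivial_limit_at_right_real] by blast
      have "\<forall>\<^sub>F t in at_top. f t < X"
        using lim_top \<open>X \<in> {a<..}\<close> by (simp add: order_tendstoD(2))
      then obtain t2 where t2: "t2 \<ge> t1" "f t2 < X"
        by (metis eventually_at_top_linorder linorder_le_cases)
      have "continuous_on {t1..t2} f"
        using t1 by (intro continuous_on_subset[OF cont]) auto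
      then obtain t where "t1 \<le> t" "t \<le> t2" "f t = X"
        using IVT2'[of f t2 X t1] t1 t2 by force
      then show "X \<in> f ` {0<..}"
        using t1 by force
    qed
  qed
qed

lemma DERIV_comp_shift:
  fixes F z s :: "real \<Rightarrow> real"
  assumes F: "(F has_real_derivative F') (at (z (T + s X)))"
    and z: "(z has_real_derivative z') (at (T + s X))"
    and s: "(s has_real_derivative s') (at X)"
  shows "((\<lambda>t. F (z (t + s X))) has_real_derivative F' * z') (at T)"
    and "((\<lambda>x. F (z (T + s x))) has_real_derivative F' * z' * s') (at X)"
proof -
  have Fz: "((\<lambda>u. F (z u)) has_real_derivative F' * z') (at (T + s X))"
    by (rule DERIV_chain2[OF F z])
  then show "((\<lambda>t. F (z (t + s X))) has_real_derivative F' * z') (at T)"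
    using DERIV_shift[of "\<lambda>u. F (z u)" _ T "s X"] by simp
  have "((\<lambda>x. T + s x) has_real_derivative 0 + s') (at X)"
    by (rule DERIV_add[OF DERIV_const s])
  from DERIV_chain2[OF Fz this]
  show "((\<lambda>x. F (z (T + s x))) has_real_derivative F' * z' * s') (at X)"
    by simp
qed

lemma sqrt_sinh_cosh_identity:
  fixes S a p q :: real
  assumes "q\<^sup>2 = 1 + p\<^sup>2" "S > 0" "a > 0" "p > 0" "q > 0"
  defines "D \<equiv> p * (S * q + a * p)"
  shows "sqrt ((2 * a + S\<^sup>2 / D)\<^sup>2 - (4 * a\<^sup>2 - 4 * S\<^sup>2)) = S * (S * (q\<^sup>2 + p\<^sup>2) + 2 * a * p * q) / D"
proof -
  have D: "D > 0"
    using assms unfolding D_def by (intro mult_pos_pos add_pos_pos) auto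
  have "(2 * a + S\<^sup>2 / D)\<^sup>2 - (4 * a\<^sup>2 - 4 * S\<^sup>2) = S\<^sup>2 * (4 * a * D + S\<^sup>2 + 4 * D\<^sup>2) / D\<^sup>2"
    using D by (simp add: field_simps power2_eq_square)
  also have "4 * a * D + S\<^sup>2 + 4 * D\<^sup>2 = (S * (q\<^sup>2 + p\<^sup>2) + 2 * a * p * q)\<^sup>2"
    using assms(1) unfolding D_def by algebra
  finally have "(2 * a + S\<^sup>2 / D)\<^sup>2 - (4 * a\<^sup>2 - 4 * S\<^sup>2) = (S * (S * (q\<^sup>2 + p\<^sup>2) + 2 * a * p * q) / D)\<^sup>2"
    by (simp add: power_divide power_mult_distrib)
  then show ?thesis
    using D assms by (simp add: real_sqrt_abs)
qed

context
  fixes gs a :: real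
  assumes gs: "gs > 0" and a: "a > 0" and ga: "2 * a ^ 3 > gs"
begin

lemma Sigma_cdt_pos: "Sigma_cdt a gs > 0"
  and gs_eq_Sigma_cdt: "2 * gs / a = 4 * a\<^sup>2 - 4 * (Sigma_cdt a gs)\<^sup>2"
proof -
  have "2 * gs / a < 4 * a ^ 3 / a"
    using gs a ga by (intro divide_strict_right_mono) auto
  then have pos: "4 * a\<^sup>2 - 2 * gs / a > 0"
    using a by (simp add: power3_eq_cube power2_eq_square)
  then show "Sigma_cdt a gs > 0"
    unfolding Sigma_cdt_def by simp
  have "(Sigma_cdt a gs)\<^sup>2 = (4 * a\<^sup>2 - 2 * gs / a) / 4"
    unfolding Sigma_cdt_def using pos by (simp add: power_mult_distrib power_divide)
  then show "2 * gs / a = 4 * a\<^sup>2 - 4 * (Sigma_cdt a gs)\<^sup>2"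
    by simp
qed

lemma Wbar_discriminant_pos: "v > a \<Longrightarrow> (v + a)\<^sup>2 - 2 * gs / a > 0"
proof -
  assume "v > a"
  then have "(2 * a)\<^sup>2 < (v + a)\<^sup>2"
    using a by (intro power_strict_mono) auto
  then have "4 * a\<^sup>2 < (v + a)\<^sup>2"
    by (simp add: power_mult_distrib)
  moreover have "(Sigma_cdt a gs)\<^sup>2 > 0"
    using Sigma_cdt_pos by simp
  ultimately show ?thesis
    unfolding gs_eq_Sigma_cdt by linarith
qed

lemma Wbar_pos: "v > a \<Longrightarrow> Wbar a gs v > 0"
  using Wbar_discriminant_pos unfolding Wbar_def by simp

lemma Z1_gt_and_has_derivative:
  assumes "T > 0"
  shows "Z1 a gs T > a"
    and "(Z1 a gs has_real_derivative - Wbar a gs (Z1 a gs T)) (at T)"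
proof -
  define S where "S = Sigma_cdt a gs"
  define p where "p = sinh (S * T)"
  define q where "q = cosh (S * T)"
  define D where "D = p * (S * q + a * p)"
  have S: "S > 0"
    unfolding S_def by (rule Sigma_cdt_pos)
  have p: "p > 0" and q: "q > 0" "q\<^sup>2 = 1 + p\<^sup>2"
    using S assms unfolding p_def q_def by (simp_all add: cosh_square_eq)
  have D: "D > 0"
    unfolding D_def using p q S a by (intro mult_pos_pos add_pos_pos) auto
  have Z1_eq: "Z1 a gs = (\<lambda>t. a + S\<^sup>2 / (sinh (S * t) * (S * cosh (S * t) + a * sinh (S * t))))"
    by (simp add: fun_eq_iff Z1_def Let_def S_def)
  have Z1_T: "Z1 a gs T = a + S\<^sup>2 / D"
    unfolding Z1_eq D_def p_def q_def by simp
  then show "Z1 a gs T > a"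
    using D S by simp
  define N where "N = S * (S * (q\<^sup>2 + p\<^sup>2) + 2 * a * p * q)"
  have "Wbar a gs (Z1 a gs T) = S\<^sup>2 / D * (N / D)"
  proof -
    have "Z1 a gs T + a = 2 * a + S\<^sup>2 / D"
      unfolding Z1_T by simp
    then show ?thesis
      using sqrt_sinh_cosh_identity[OF q(2) S a p q(1)]
      unfolding Wbar_def gs_eq_Sigma_cdt S_def[symmetric] D_def[symmetric] N_def[symmetric]
      by (simp add: Z1_T)
  qed
  have den: "((\<lambda>t. sinh (S * t) * (S * cosh (S * t) + a * sinh (S * t))) has_real_derivative N) (at T)"
    unfolding N_def p_def q_def by (auto intro!: derivative_eq_intros simp: algebra_simps power2_eq_square)
  have "sinh (S * T) * (S * cosh (S * T) + a * sinh (S * T)) \<noteq> 0"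
    using D unfolding D_def p_def q_def by (metis less_irrefl)
  from DERIV_add[OF DERIV_const DERIV_divide[OF DERIV_const den this], of a "S\<^sup>2"]
  have "(Z1 a gs has_real_derivative - (S\<^sup>2 * N / D\<^sup>2)) (at T)"
    unfolding Z1_eq by (simp add: D_def p_def q_def power2_eq_square)
  then show "(Z1 a gs has_real_derivative - Wbar a gs (Z1 a gs T)) (at T)"
    using \<open>Wbar a gs (Z1 a gs T) = S\<^sup>2 / D * (N / D)\<close> by (simp add: power2_eq_square)
qed

lemmas Z1_gt = Z1_gt_and_has_derivative(1)
  and Z1_has_derivative = Z1_gt_and_has_derivative(2)

lemma Z1_strict_antimono: "strict_antimono_on {0<..} (Z1 a gs)"
proof (rule monotone_onI)
  fix x y :: real
  assume x: "x \<in> {0<..}" and "y \<in> {0<..}" "x < y"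
  show "Z1 a gs y < Z1 a gs x"
  proof (rule DERIV_neg_imp_decreasing[OF \<open>x < y\<close>])
    fix t assume "x \<le> t"
    then have "t > 0"
      using x by simp
    then show "\<exists>D. (Z1 a gs has_real_derivative D) (at t) \<and> D < 0"
      using Z1_has_derivative Wbar_pos[OF Z1_gt] by (meson neg_less_0_iff_less)
  qed
qed

lemma continuous_on_Z1: "continuous_on {0<..} (Z1 a gs)"
  by (rule continuous_at_imp_continuous_on) (auto intro: DERIV_isCont Z1_has_derivative)

lemma Z1_tendsto_at_top: "(Z1 a gs \<longlongrightarrow> a) at_top"
  and Z1_at_right_0: "filterlim (Z1 a gs) at_top (at_right 0)"
  using Sigma_cdt_pos a unfolding Z1_def[abs_def] Let_def by real_asymp+

lemma Z1_bij: "bij_betw (Z1 a gs) {0<..} {a<..}"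
  by (rule bij_betw_greaterThan_if_strict_antimono[OF Z1_strict_antimono continuous_on_Z1
        Z1_gt Z1_tendsto_at_top Z1_at_right_0])

lemma Z1inv_pos: "X > a \<Longrightarrow> Z1inv a gs X > 0"
  and Z1_Z1inv: "X > a \<Longrightarrow> Z1 a gs (Z1inv a gs X) = X"
  using Z1_bij unfolding Z1inv_def bij_betw_def
  by (metis greaterThan_iff inv_into_into, metis f_inv_into_f greaterThan_iff)

lemma Z1inv_Z1: "T > 0 \<Longrightarrow> Z1inv a gs (Z1 a gs T) = T"
  using Z1_bij unfolding Z1inv_def bij_betw_def by (simp add: inv_into_f_f)

lemma Z1inv_has_derivative:
  assumes X: "X > a"
  shows "(Z1inv a gs has_real_derivative - 1 / Wbar a gs X) (at X)"
proof -
  define s where "s = Z1inv a gs X"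
  have s: "s > 0" "Z1 a gs s = X"
    using Z1inv_pos[OF X] Z1_Z1inv[OF X] unfolding s_def by auto
  have near_s: "z > 0" if "\<bar>z - s\<bar> \<le> s / 2" for z
    using s that by arith
  have "isCont (Z1inv a gs) (Z1 a gs s)"
  proof (rule isCont_inverse_function[where f = "Z1 a gs" and x = s and d = "s / 2"])
    show "0 < s / 2"
      using s by simp
    show "Z1inv a gs (Z1 a gs z) = z" if "\<bar>z - s\<bar> \<le> s / 2" for z
      using Z1inv_Z1[OF near_s[OF that]] .
    show "isCont (Z1 a gs) z" if "\<bar>z - s\<bar> \<le> s / 2" for z
      using continuous_on_Z1 near_s[OF that] by (simp add: continuous_on_eq_continuous_at)
  qed
  then have cont: "isCont (Z1inv a gs) X"
    using s by simp
  have "(Z1 a gs has_real_derivative - Wbar a gs X) (at (Z1inv a gs X))"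
    using Z1_has_derivative[OF s(1)] s unfolding s_def by simp
  then have "(Z1inv a gs has_real_derivative inverse (- Wbar a gs X)) (at X)"
  proof (rule DERIV_inverse_function[where b = "X + 1", OF _ _ _ _ _ cont])
    show "- Wbar a gs X \<noteq> 0"
      using Wbar_pos[OF X] by simp
    show "Z1 a gs (Z1inv a gs y) = y" if "a < y" for y
      using Z1_Z1inv[OF that] .
  qed (use X in auto)
  then show ?thesis
    by (simp add: inverse_eq_divide)
qed

lemma deriv_Z1X: "X > a \<Longrightarrow> t + Z1inv a gs X > 0 \<Longrightarrow>
    deriv (Z1X a gs X) t = - Wbar a gs (Z1 a gs (t + Z1inv a gs X))"
  unfolding Z1X_def[abs_def]
  by (rule DERIV_imp_deriv) (use Z1_has_derivative DERIV_shift in blast)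

lemma Gprop_eq:
  assumes "X > a" "Y > 0" "t + Z1inv a gs X > 0"
  shows "Gprop a gs X Y t =
    Wbar a gs (Z1 a gs (t + Z1inv a gs X)) / (Y + Z1 a gs (t + Z1inv a gs X)) / Wbar a gs X"
  using assms deriv_Z1X[OF assms(1,3)] deriv_Z1X[of X 0] Z1inv_pos Z1_Z1inv Wbar_pos
  by (simp add: Gprop_def Z1X_def)

lemma Gprop_0:
  assumes "X > a" "Y > 0"
  shows "Gprop a gs X Y 0 = 1 / (X + Y)"
  using assms Gprop_eq[of X Y 0] Z1inv_pos[OF assms(1)] Z1_Z1inv[OF assms(1)] Wbar_pos[OF assms(1)]
  by (simp add: add.commute)

lemma Gprop_transport:
  assumes X: "X > a" and Y: "Y > 0" and T: "T \<ge> 0"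
  shows "\<exists>D. ((\<lambda>t. Gprop a gs X Y t) has_real_derivative D) (at T within {0..}) \<and>
    ((\<lambda>x. Wbar a gs x * Gprop a gs x Y T) has_real_derivative - D) (at X)"
proof -
  define F where "F v = Wbar a gs v / (Y + v)" for v
  define v where "v = Z1 a gs (T + Z1inv a gs X)"
  have T_shift: "T + Z1inv a gs X > 0"
    using Z1inv_pos[OF X] T by simp
  then have "v > a"
    unfolding v_def by (rule Z1_gt)
  then obtain F' where F': "(F has_real_derivative F') (at v)"
    using Y a Wbar_discriminant_pos unfolding F_def Wbar_def
    by (fastforce intro!: derivative_eq_intros)
  note transport = DERIV_comp_shift[OF F'[unfolded v_def] Z1_has_derivative[OF T_shift]
      Z1inv_has_derivative[OF X]]
  define D where "D = F' * - Wbar a gs v / Wbar a gs X"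
  have "((\<lambda>t. F (Z1 a gs (t + Z1inv a gs X)) / Wbar a gs X) has_real_derivative D) (at T)"
    unfolding D_def v_def by (rule DERIV_cdivide[OF transport(1)])
  then have "((\<lambda>t. Gprop a gs X Y t) has_real_derivative D) (at T within {0..})"
    by (rule has_field_derivative_transform_within[OF has_field_derivative_at_within zero_less_one])
      (use T Z1inv_pos[OF X] Gprop_eq[OF X Y] in \<open>auto simp: F_def\<close>)
  moreover have "((\<lambda>x. Wbar a gs x * Gprop a gs x Y T) has_real_derivative - D) (at X)"
  proof (rule has_field_derivative_transform_within_open[of "\<lambda>x. F (Z1 a gs (T + Z1inv a gs x))"
        _ _ "{a<..}"])
    show "((\<lambda>x. F (Z1 a gs (T + Z1inv a gs x))) has_real_derivative - D) (at X)"
      using transport(2) Wbar_pos[OF X] unfolding D_def v_def by (simp add: field_simps)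
    show "F (Z1 a gs (T + Z1inv a gs x)) = Wbar a gs x * Gprop a gs x Y T" if "x \<in> {a<..}" for x
      using that T Z1inv_pos[of x] Gprop_eq[of x Y T] Y Wbar_pos[of x] by (simp add: F_def)
  qed (use X in auto)
  ultimately show ?thesis
    by blast
qed

lemma Gprop_has_integral:
  assumes X: "X > a" and Y: "Y > 0"
  shows "((\<lambda>T. Gprop a gs X Y T) has_integral (ln (Y + X) - ln (Y + a)) / Wbar a gs X) {0..}"
proof -
  define A where "A t = - ln (Y + Z1 a gs (t + Z1inv a gs X)) / Wbar a gs X" for t
  have "((\<lambda>t. Gprop a gs X Y t) has_integral - ln (Y + a) / Wbar a gs X - A 0) {0..}"
  proof (rule has_integral_atLeast_of_antiderivative)
    fix t :: real assume "t \<ge> 0"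
    then have t: "t + Z1inv a gs X > 0"
      using Z1inv_pos[OF X] by simp
    then have Z: "Z1 a gs (t + Z1inv a gs X) > a"
      by (rule Z1_gt)
    have "((\<lambda>u. ln (Y + u)) has_real_derivative 1 / (Y + Z1 a gs (t + Z1inv a gs X)))
        (at (Z1 a gs (t + Z1inv a gs X)))"
      using Z Y a by (auto intro!: derivative_eq_intros simp: divide_inverse)
    from DERIV_comp_shift(1)[OF this Z1_has_derivative[OF t] Z1inv_has_derivative[OF X]]
    show "(A has_real_derivative Gprop a gs X Y t) (at t)"
      unfolding A_def using Gprop_eq[OF X Y t]
      by (auto dest: DERIV_cdivide[where c = "- Wbar a gs X"])
    show "Gprop a gs X Y t \<ge> 0"
      using Gprop_eq[OF X Y t] Wbar_pos[OF X] Wbar_pos[OF Z] Z Y a by simp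
  next
    have "((\<lambda>t. Z1 a gs (t + Z1inv a gs X)) \<longlongrightarrow> a) at_top"
      by (rule filterlim_compose[OF Z1_tendsto_at_top]) real_asymp
    then show "(A \<longlongrightarrow> - ln (Y + a) / Wbar a gs X) at_top"
      unfolding A_def using Y a Wbar_pos[OF X] by (intro tendsto_intros) auto
  qed
  moreover have "- ln (Y + a) / Wbar a gs X - A 0 = (ln (Y + X) - ln (Y + a)) / Wbar a gs X"
    unfolding A_def using Z1_Z1inv[OF X] Wbar_pos[OF X] by (simp add: field_simps)
  ultimately show ?thesis
    by simp
qed

lemma Gprop_integral_asymptotics:
  assumes X: "X > a"
  shows "((\<lambda>Y. Y * integral {0..} (\<lambda>T. Gprop a gs X Y T)) \<longlongrightarrow> (X - a) / Wbar a gs X) at_top"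
proof -
  have "((\<lambda>Y. Y * (ln (Y + X) - ln (Y + a))) \<longlongrightarrow> X - a) at_top"
    using X a by real_asymp
  then have "((\<lambda>Y. Y * (ln (Y + X) - ln (Y + a)) / Wbar a gs X) \<longlongrightarrow> (X - a) / Wbar a gs X) at_top"
    by (rule tendsto_divide) (use Wbar_pos[OF X] in auto)
  moreover have "\<forall>\<^sub>F Y in at_top.
      Y * (ln (Y + X) - ln (Y + a)) / Wbar a gs X = Y * integral {0..} (\<lambda>T. Gprop a gs X Y T)"
    using eventually_gt_at_top[of 0]
    by eventually_elim (simp add: integral_unique[OF Gprop_has_integral[OF X]])
  ultimately show ?thesis
    by (rule Lim_transform_eventually)
qed

lemma deriv_Z1_Z1inv: "X > a \<Longrightarrow> deriv (Z1 a gs) (Z1inv a gs X) = - Wbar a gs X"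
  using DERIV_imp_deriv[OF Z1_has_derivative[OF Z1inv_pos]] Z1_Z1inv by simp

end

theorem mainTheorem10:
  fixes lam gs \<alpha> :: real
  assumes "lam > 0" and "gs > 0" and "\<alpha> > 0"
    and "\<alpha>^3 - lam * \<alpha> + gs = 0" and "2 * \<alpha>^3 > gs"
  shows "strict_antimono_on {0<..} (Z1 \<alpha> gs) \<and> bij_betw (Z1 \<alpha> gs) {0<..} {\<alpha><..} \<and>
    (\<forall>X Y. X > \<alpha> \<longrightarrow> Y > 0 \<longrightarrow> Gprop \<alpha> gs X Y 0 = 1 / (X + Y)) \<and>
    (\<forall>X Y T. X > \<alpha> \<longrightarrow> Y > 0 \<longrightarrow> T \<ge> 0 \<longrightarrow>
       (\<exists>D. ((\<lambda>t. Gprop \<alpha> gs X Y t) has_real_derivative D) (at T within {0..}) \<and>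
            ((\<lambda>x. Wbar \<alpha> gs x * Gprop \<alpha> gs x Y T) has_real_derivative (- D)) (at X))) \<and>
    (\<forall>X Y. X > \<alpha> \<longrightarrow> Y > 0 \<longrightarrow> (\<lambda>T. Gprop \<alpha> gs X Y T) integrable_on {0..}) \<and>
    (\<forall>X. X > \<alpha> \<longrightarrow>
       ((\<lambda>Y. Y * integral {0..} (\<lambda>T. Gprop \<alpha> gs X Y T))
          \<longlongrightarrow> (\<alpha> - X) / deriv (Z1 \<alpha> gs) (Z1inv \<alpha> gs X)) at_top \<and>
       (\<alpha> - X) / deriv (Z1 \<alpha> gs) (Z1inv \<alpha> gs X) = 1 / sqrt ((X + \<alpha>)^2 - 2 * gs / \<alpha>))"
proof -
  note params = assms(2,3,5)
  have limit_value: "(\<alpha> - X) / deriv (Z1 \<alpha> gs) (Z1inv \<alpha> gs X) = (X - \<alpha>) / Wbar \<alpha> gs X"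
    if "X > \<alpha>" for X
    using deriv_Z1_Z1inv[OF params that] Wbar_pos[OF params that] by (simp add: field_simps)
  have Wbar_quotient: "(X - \<alpha>) / Wbar \<alpha> gs X = 1 / sqrt ((X + \<alpha>)^2 - 2 * gs / \<alpha>)"
    if "X > \<alpha>" for X
    using that by (simp add: Wbar_def)
  show ?thesis
    using Z1_strict_antimono[OF params] Z1_bij[OF params] Gprop_0[OF params]
      Gprop_transport[OF params] has_integral_integrable[OF Gprop_has_integral[OF params]]
      Gprop_integral_asymptotics[OF params]
    by (simp add: limit_value Wbar_quotient)
qed

end
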